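(* Let $c\in\mathbb{N}$ and let $F$ be a double-fan on at least $8c^2+2c+1$ vertices, with centres $v_1,v_2$. Let $\mathcal{P},\mathcal{Q}$ be partitions of $F$ such that $\mathcal{P}$ is a tree-partition and $|P\cap Q|\leq c$ for all $P\in\mathcal{P}$ and $Q\in\mathcal{Q}$. For a vertex $v_i$, let $P_i$ and $Q_i$ denote the parts of $\mathcal{P}$ and $\mathcal{Q}$ containing $v_i$. If $P_1\neq P_2$ and $Q_1\neq Q_2$, then there exist vertices $v_3,v_4$ of $F$ such that $\{v_1,v_2,v_3,v_4\}$ is a $4$-clique in $F$ and $Q_1,Q_2,Q_3,Q_4$ are pairwise distinct.
   Context: All graphs are finite, simple and undirected. A partition $\mathcal{P}$ of a graph $G$ is a partition of $V(G)$ into parts. The quotient $G/\mathcal{P}$ is the graph whose vertices are the non-empty parts of $\mathcal{P}$, where distinct parts $P_1,P_2$ are adjacent iff some $v_1\in P_1$ and $v_2\in P_2$ satisfy $v_1v_2\in E(G)$. $\mathcal{P}$ is a tree-partition if $G/\mathcal{P}$ is isomorphic to a subgraph of a tree. A vertex is dominant if it is adjacent to every other vertex. A graph $F$ is a double-fan if it has two dominant vertices $v$ and $w$, called the centres, such that $F-v-w$ is a path. *)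

theory Defs
  imports Main "HOL-Library.Disjoint_Sets"
begin

definition graph :: "'a set \<Rightarrow> 'a set set \<Rightarrow> bool" where
  "graph V E \<longleftrightarrow> finite V \<and> (\<forall>e\<in>E. \<exists>u v. e = {u, v} \<and> u \<noteq> v \<and> u \<in> V \<and> v \<in> V)"

definition adj :: "'a set set \<Rightarrow> 'a \<Rightarrow> 'a \<Rightarrow> bool" where
  "adj E u v \<longleftrightarrow> {u, v} \<in> E"

definition dominant :: "'a set \<Rightarrow> 'a set set \<Rightarrow> 'a \<Rightarrow> bool" where
  "dominant V E v \<longleftrightarrow> v \<in> V \<and> (\<forall>u\<in>V. u \<noteq> v \<longrightarrow> adj E v u)"

definition induced_edges :: "'a set set \<Rightarrow> 'a set \<Rightarrow> 'a set set" where
  "induced_edges E S = {e \<in> E. e \<subseteq> S}"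

definition is_path_graph :: "'a set \<Rightarrow> 'a set set \<Rightarrow> bool" where
  "is_path_graph V E \<longleftrightarrow> (\<exists>xs. xs \<noteq> [] \<and> distinct xs \<and> set xs = V \<and>
      E = {{xs ! i, xs ! Suc i} | i. Suc i < length xs})"

definition double_fan :: "'a set \<Rightarrow> 'a set set \<Rightarrow> 'a \<Rightarrow> 'a \<Rightarrow> bool" where
  "double_fan V E v w \<longleftrightarrow> graph V E \<and> v \<noteq> w \<and> dominant V E v \<and> dominant V E w \<and>
     is_path_graph (V - {v, w}) (induced_edges E (V - {v, w}))"

definition walk :: "'b set \<Rightarrow> 'b set set \<Rightarrow> 'b list \<Rightarrow> bool" where
  "walk V E xs \<longleftrightarrow> xs \<noteq> [] \<and> set xs \<subseteq> V \<and> (\<forall>i. Suc i < length xs \<longrightarrow> adj E (xs ! i) (xs ! Suc i))"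

definition connected_graph :: "'b set \<Rightarrow> 'b set set \<Rightarrow> bool" where
  "connected_graph V E \<longleftrightarrow> (\<forall>u\<in>V. \<forall>v\<in>V. \<exists>xs. walk V E xs \<and> hd xs = u \<and> last xs = v)"

definition has_cycle :: "'b set \<Rightarrow> 'b set set \<Rightarrow> bool" where
  "has_cycle V E \<longleftrightarrow> (\<exists>xs. length xs \<ge> 3 \<and> distinct xs \<and> walk V E xs \<and> adj E (last xs) (hd xs))"

definition is_tree :: "'b set \<Rightarrow> 'b set set \<Rightarrow> bool" where
  "is_tree V E \<longleftrightarrow> graph V E \<and> V \<noteq> {} \<and> connected_graph V E \<and> \<not> has_cycle V E"

text \<open>Partitions: the library notion partition_on (nonempty, pairwise disjoint parts covering V).
  Quotient graph G/P: vertices are the parts, distinct parts adjacent iff an edge joins them.\<close>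
definition quotient_edges :: "'a set set \<Rightarrow> 'a set set \<Rightarrow> 'a set set set" where
  "quotient_edges E \<P> = {{P1, P2} | P1 P2. P1 \<in> \<P> \<and> P2 \<in> \<P> \<and> P1 \<noteq> P2 \<and>
      (\<exists>v1\<in>P1. \<exists>v2\<in>P2. {v1, v2} \<in> E)}"

definition iso_subgraph :: "'b set \<Rightarrow> 'b set set \<Rightarrow> 'c set \<Rightarrow> 'c set set \<Rightarrow> bool" where
  "iso_subgraph V E V' E' \<longleftrightarrow> (\<exists>f. inj_on f V \<and> f ` V \<subseteq> V' \<and>
      (\<forall>u\<in>V. \<forall>v\<in>V. {u, v} \<in> E \<longrightarrow> {f u, f v} \<in> E'))"

definition tree_partition :: "'a set \<Rightarrow> 'a set set \<Rightarrow> 'a set set \<Rightarrow> bool" where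
  "tree_partition V E \<P> \<longleftrightarrow> partition_on V \<P> \<and>
     (\<exists>T :: nat set. \<exists>ET. is_tree T ET \<and> iso_subgraph \<P> (quotient_edges E \<P>) T ET)"

definition part_of :: "'a set set \<Rightarrow> 'a \<Rightarrow> 'a set" where
  "part_of \<P> v = (THE X. X \<in> \<P> \<and> v \<in> X)"

definition is_clique :: "'a set set \<Rightarrow> 'a set \<Rightarrow> bool" where
  "is_clique E S \<longleftrightarrow> (\<forall>u\<in>S. \<forall>v\<in>S. u \<noteq> v \<longrightarrow> adj E u v)"

end

theory Submission
  imports Defs
begin

text \<open>
  Since \<open>v\<^sub>1\<close> and \<open>v\<^sub>2\<close> are dominant and lie in different parts \<open>P\<^sub>1, P\<^sub>2\<close> of the
  tree-partition, a vertex outside \<open>P\<^sub>1 \<union> P\<^sub>2\<close> would span a triangle in the quotient.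
  Hence \<open>V \<subseteq> P\<^sub>1 \<union> P\<^sub>2\<close>, and every part of \<open>\<Q>\<close> has at most \<open>2c\<close> vertices.
  Colour the path \<open>F - v\<^sub>1 - v\<^sub>2\<close> by the parts of \<open>\<Q>\<close>. At most \<open>4c - 2\<close> of its vertices
  have colour \<open>Q\<^sub>1\<close> or \<open>Q\<^sub>2\<close>; if no two adjacent vertices had distinct colours other
  than \<open>Q\<^sub>1, Q\<^sub>2\<close>, the remaining vertices would form monochromatic runs of at most \<open>2c\<close>
  vertices each, so the path would have at most \<open>(4c - 2)(2c + 1) + 2c < |V| - 2\<close> vertices.
  Two such adjacent vertices together with \<open>v\<^sub>1, v\<^sub>2\<close> form the required clique.
\<close>

lemma part_of_eqI:
  assumes "partition_on V \<P>" "P \<in> \<P>" "x \<in> P"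
  shows "part_of \<P> x = P"
  unfolding part_of_def
proof (rule the_equality)
  show "P \<in> \<P> \<and> x \<in> P" using assms by auto
next
  fix X assume "X \<in> \<P> \<and> x \<in> X"
  then show "X = P" using assms partition_onD2[OF assms(1)] by (auto dest: disjointD)
qed

lemma part_of_mem:
  assumes "partition_on V \<P>" "x \<in> V"
  shows "part_of \<P> x \<in> \<P>" "x \<in> part_of \<P> x"
proof -
  obtain P where "P \<in> \<P>" "x \<in> P" using assms partition_onD1[OF assms(1)] by auto
  then show "part_of \<P> x \<in> \<P>" "x \<in> part_of \<P> x" using part_of_eqI[OF assms(1)] by auto
qed

lemma finite_part:
  assumes "partition_on V \<P>" "finite V" "P \<in> \<P>"
  shows "finite P"
  using assms partition_onD1[OF assms(1)] by (auto intro: finite_subset)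

lemma cap_pos:
  assumes "partition_on V \<P>" "partition_on V \<Q>" "finite V" "v \<in> V"
    and "\<forall>P\<in>\<P>. \<forall>Q\<in>\<Q>. card (P \<inter> Q) \<le> c"
  shows "0 < c"
proof -
  have "v \<in> part_of \<P> v \<inter> part_of \<Q> v"
    using part_of_mem(2)[OF assms(1,4)] part_of_mem(2)[OF assms(2,4)] by simp
  then have "0 < card (part_of \<P> v \<inter> part_of \<Q> v)"
    using finite_part[OF assms(2,3) part_of_mem(1)[OF assms(2,4)]] by (auto simp: card_gt_0_iff)
  moreover have "card (part_of \<P> v \<inter> part_of \<Q> v) \<le> c"
    using assms(5) part_of_mem(1)[OF assms(1,4)] part_of_mem(1)[OF assms(2,4)] by blast
  ultimately show ?thesis by linarith
qed

lemma graph_edge_in_vertices: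
  assumes "graph V E" "{u, v} \<in> E"
  shows "u \<in> V"
  using assms unfolding graph_def by (metis doubleton_eq_iff)

lemma walk_iff_successively:
  "walk V E xs \<longleftrightarrow> xs \<noteq> [] \<and> set xs \<subseteq> V \<and> successively (adj E) xs"
  unfolding walk_def successively_conv_nth ..

lemma is_tree_no_triangle:
  assumes "is_tree T ET" "distinct [a, b, c]"
    and "{a, b} \<in> ET" "{b, c} \<in> ET" "{c, a} \<in> ET"
  shows False
proof -
  have g: "graph T ET" using assms(1) unfolding is_tree_def by simp
  have "a \<in> T" "b \<in> T" "c \<in> T"
    using graph_edge_in_vertices[OF g] assms(3-5) by blast+
  then have "walk T ET [a, b, c]"
    using assms(3,4) by (simp add: walk_iff_successively adj_def)
  then have "has_cycle T ET"
    unfolding has_cycle_def using assms(2,5) by (intro exI[of _ "[a, b, c]"]) (simp add: adj_def)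
  then show False using assms(1) unfolding is_tree_def by simp
qed

lemma quotient_edgeI:
  assumes "P1 \<in> \<P>" "P2 \<in> \<P>" "P1 \<noteq> P2" "v1 \<in> P1" "v2 \<in> P2" "{v1, v2} \<in> E"
  shows "{P1, P2} \<in> quotient_edges E \<P>"
  unfolding quotient_edges_def using assms by blast

lemma tree_partition_no_triangle:
  assumes "tree_partition V E \<P>" "P1 \<in> \<P>" "P2 \<in> \<P>" "P3 \<in> \<P>" "distinct [P1, P2, P3]"
    and "{P1, P2} \<in> quotient_edges E \<P>" "{P2, P3} \<in> quotient_edges E \<P>"
    "{P3, P1} \<in> quotient_edges E \<P>"
  shows False
proof -
  obtain T :: "nat set" and ET f where tree: "is_tree T ET" and inj: "inj_on f \<P>"
    and hom: "\<forall>u\<in>\<P>. \<forall>v\<in>\<P>. {u, v} \<in> quotient_edges E \<P> \<longrightarrow> {f u, f v} \<in> ET"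
    using assms(1) unfolding tree_partition_def iso_subgraph_def by blast
  have "distinct [f P1, f P2, f P3]"
    using assms(2-5) inj by (auto dest: inj_onD)
  then show False
    using is_tree_no_triangle[OF tree] hom assms(2-4,6-8) by blast
qed

lemma tree_partition_dominant_pair_cover:
  assumes "tree_partition V E \<P>" "dominant V E v1" "dominant V E v2"
    and "part_of \<P> v1 \<noteq> part_of \<P> v2" "x \<in> V"
  shows "x \<in> part_of \<P> v1 \<union> part_of \<P> v2"
proof (rule ccontr)
  define P1 P2 Px where "P1 = part_of \<P> v1" "P2 = part_of \<P> v2" "Px = part_of \<P> x"
  assume "x \<notin> part_of \<P> v1 \<union> part_of \<P> v2"
  then have x_out: "x \<notin> P1" "x \<notin> P2" unfolding P1_P2_Px_def by auto
  have part: "partition_on V \<P>" using assms(1) unfolding tree_partition_def by simp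
  have "v1 \<in> V" "v2 \<in> V" using assms(2,3) unfolding dominant_def by auto
  then have parts: "P1 \<in> \<P>" "P2 \<in> \<P>" "Px \<in> \<P>" and mem: "v1 \<in> P1" "v2 \<in> P2" "x \<in> Px"
    using part_of_mem[OF part] assms(5) unfolding P1_P2_Px_def by auto
  have "v1 \<noteq> v2" "x \<noteq> v1" "x \<noteq> v2" using mem x_out assms(4) unfolding P1_P2_Px_def by auto
  then have "{v1, v2} \<in> E" "{v2, x} \<in> E" "{x, v1} \<in> E"
    using assms(2,3,5) \<open>v2 \<in> V\<close> unfolding dominant_def adj_def by (auto simp: insert_commute)
  moreover have "distinct [P1, P2, Px]"
    using x_out mem assms(4) unfolding P1_P2_Px_def by auto
  ultimately show False
    using tree_partition_no_triangle[OF assms(1) parts] quotient_edgeI[of _ \<P>] parts mem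
    by (metis distinct_length_2_or_more)
qed

lemma card_part_le_twice_cap:
  assumes "tree_partition V E \<P>" "dominant V E v1" "dominant V E v2"
    and "part_of \<P> v1 \<noteq> part_of \<P> v2"
    and "partition_on V \<Q>" "\<forall>P\<in>\<P>. \<forall>Q\<in>\<Q>. card (P \<inter> Q) \<le> c" "Y \<in> \<Q>"
  shows "card Y \<le> 2 * c"
proof -
  have part: "partition_on V \<P>" using assms(1) unfolding tree_partition_def by simp
  have "v1 \<in> V" "v2 \<in> V" using assms(2,3) unfolding dominant_def by auto
  have "Y \<subseteq> part_of \<P> v1 \<union> part_of \<P> v2"
    using tree_partition_dominant_pair_cover[OF assms(1-4)] partition_onD1[OF assms(5)] assms(7)
    by blast
  then have "card Y \<le> card (part_of \<P> v1 \<inter> Y) + card (part_of \<P> v2 \<inter> Y)"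
    by (metis Int_Un_distrib2 card_Un_le inf.absorb_iff2)
  moreover have "card (part_of \<P> v1 \<inter> Y) \<le> c" "card (part_of \<P> v2 \<inter> Y) \<le> c"
    using assms(6,7) part_of_mem(1)[OF part \<open>v1 \<in> V\<close>] part_of_mem(1)[OF part \<open>v2 \<in> V\<close>] by auto
  ultimately show ?thesis by linarith
qed

lemma double_fan_spine:
  assumes "double_fan V E v1 v2"
  obtains xs where "distinct xs" "set xs = V - {v1, v2}" "length xs = card V - 2"
    and "successively (\<lambda>a b. {a, b} \<in> E) xs"
proof -
  obtain xs where xs: "distinct xs" "set xs = V - {v1, v2}"
    and edges: "induced_edges E (V - {v1, v2}) = {{xs ! i, xs ! Suc i} | i. Suc i < length xs}"
    using assms unfolding double_fan_def is_path_graph_def by blast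
  have "finite V" "v1 \<noteq> v2" "v1 \<in> V" "v2 \<in> V"
    using assms unfolding double_fan_def graph_def dominant_def by auto
  then have "length xs = card V - 2"
    using distinct_card[OF xs(1)] xs(2) by (simp add: card_Diff_subset)
  moreover have "successively (\<lambda>a b. {a, b} \<in> E) xs"
    unfolding successively_conv_nth
  proof (intro allI impI)
    fix i assume "Suc i < length xs"
    then have "{xs ! i, xs ! Suc i} \<in> induced_edges E (V - {v1, v2})" unfolding edges by blast
    then show "{xs ! i, xs ! Suc i} \<in> E" unfolding induced_edges_def by simp
  qed
  ultimately show thesis using that xs by blast
qed

lemma double_fan_clique:
  assumes "double_fan V E v1 v2" "a \<in> V - {v1, v2}" "b \<in> V - {v1, v2}" "a \<noteq> b" "{a, b} \<in> E"
  shows "card {v1, v2, a, b} = 4" "is_clique E {v1, v2, a, b}"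
proof -
  have "v1 \<noteq> v2" "dominant V E v1" "dominant V E v2"
    using assms(1) unfolding double_fan_def by auto
  then have "adj E v1 v2" "adj E v1 a" "adj E v1 b" "adj E v2 a" "adj E v2 b" "adj E a b"
    using assms(2,3,5) unfolding dominant_def adj_def by auto
  moreover have "adj E u w \<Longrightarrow> adj E w u" for u w
    unfolding adj_def by (simp add: insert_commute)
  ultimately show "is_clique E {v1, v2, a, b}" unfolding is_clique_def by blast
  show "card {v1, v2, a, b} = 4" using \<open>v1 \<noteq> v2\<close> assms(2-4) by auto
qed

lemma successively_counterexample:
  assumes "successively P xs" "\<not> successively Q xs"
  shows "\<exists>a\<in>set xs. \<exists>b\<in>set xs. P a b \<and> \<not> Q a b"
proof (rule ccontr)
  assume "\<not> ?thesis"
  then have "successively Q xs" by (intro successively_mono[OF assms(1)]) auto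
  with assms(2) show False by contradiction
qed

text \<open>The last summand bounds the leading run of entries outside \<open>B\<close>: these entries are all
  equal, so the run is no longer than the multiplicity of its value.\<close>

lemma length_le_runs_count:
  assumes "\<forall>y. count_list ys y \<le> m"
    and "successively (\<lambda>a b. a \<notin> B \<longrightarrow> b \<notin> B \<longrightarrow> a = b) ys"
  shows "length ys \<le> length (filter (\<lambda>y. y \<in> B) ys) * (m + 1)
           + (if ys \<noteq> [] \<and> hd ys \<notin> B then count_list ys (hd ys) else 0)"
  using assms
proof (induction ys)
  case Nil
  then show ?case by simp
next
  case (Cons a zs)
  have "count_list zs y \<le> count_list (a # zs) y" for y by simp
  then have count_zs: "\<forall>y. count_list zs y \<le> m" using Cons.prems(1) le_trans by blast
  have "successively (\<lambda>a b. a \<notin> B \<longrightarrow> b \<notin> B \<longrightarrow> a = b) zs"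
    using Cons.prems(2) by (cases zs) auto
  note IH = Cons.IH[OF count_zs this]
  show ?case
  proof (cases "a \<in> B")
    case True
    have "(if zs \<noteq> [] \<and> hd zs \<notin> B then count_list zs (hd zs) else 0) \<le> m"
      using count_zs by simp
    then show ?thesis using IH True by simp
  next
    case False
    have "hd zs = a" if "zs \<noteq> []" "hd zs \<notin> B"
      using Cons.prems(2) False that by (cases zs) auto
    then show ?thesis using IH False by (cases "zs \<noteq> [] \<and> hd zs \<notin> B") auto
  qed
qed

lemma length_le_runs:
  assumes "\<forall>y. count_list ys y \<le> m"
    and "successively (\<lambda>a b. a \<notin> B \<longrightarrow> b \<notin> B \<longrightarrow> a = b) ys"
  shows "length ys \<le> length (filter (\<lambda>y. y \<in> B) ys) * (m + 1) + m"
proof -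
  have "(if ys \<noteq> [] \<and> hd ys \<notin> B then count_list ys (hd ys) else 0) \<le> m"
    using assms(1) by simp
  then show ?thesis using length_le_runs_count[OF assms] by linarith
qed

lemma long_list_has_colour_change:
  assumes "\<forall>y. count_list ys y \<le> m" "length (filter (\<lambda>y. y \<in> B) ys) \<le> k"
    and "k * (m + 1) + m < length ys"
  shows "\<not> successively (\<lambda>a b. a \<notin> B \<longrightarrow> b \<notin> B \<longrightarrow> a = b) ys"
proof
  assume "successively (\<lambda>a b. a \<notin> B \<longrightarrow> b \<notin> B \<longrightarrow> a = b) ys"
  then have "length ys \<le> length (filter (\<lambda>y. y \<in> B) ys) * (m + 1) + m"
    using length_le_runs assms(1) by blast
  also have "\<dots> \<le> k * (m + 1) + m" using assms(2) by (intro add_right_mono mult_right_mono) simp_all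
  finally show False using assms(3) by simp
qed

lemma count_list_map_part_of_le:
  assumes "partition_on V \<Q>" "finite V" "distinct xs" "set xs \<subseteq> V" "\<forall>Y\<in>\<Q>. card Y \<le> m"
  shows "count_list (map (part_of \<Q>) xs) Y \<le> m"
proof (cases "Y \<in> \<Q>")
  case True
  have "count_list (map (part_of \<Q>) xs) Y = card ({x. Y = part_of \<Q> x} \<inter> set xs)"
    using assms(3) by (simp add: count_list_eq_length_filter filter_map comp_def distinct_length_filter)
  also have "\<dots> \<le> card Y"
    using assms(1,4) part_of_mem(2)[OF assms(1)] finite_part[OF assms(1,2) True]
    by (intro card_mono) auto
  also have "\<dots> \<le> m" using assms(5) True by blast
  finally show ?thesis .
next
  case False
  then have "Y \<notin> set (map (part_of \<Q>) xs)"
    using part_of_mem(1)[OF assms(1)] assms(4) by auto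
  then show ?thesis by simp
qed

lemma length_filter_part_of_pair_le:
  assumes "partition_on V \<Q>" "finite V" "distinct xs" "set xs \<subseteq> V - {v1, v2}"
    and "v1 \<in> V" "v2 \<in> V" "\<forall>Y\<in>\<Q>. card Y \<le> m"
  shows "length (filter (\<lambda>Y. Y \<in> {part_of \<Q> v1, part_of \<Q> v2}) (map (part_of \<Q>) xs)) \<le> 2 * m - 2"
proof -
  define Q1 Q2 where "Q1 = part_of \<Q> v1" "Q2 = part_of \<Q> v2"
  have parts: "Q1 \<in> \<Q>" "Q2 \<in> \<Q>" "v1 \<in> Q1" "v2 \<in> Q2"
    using part_of_mem[OF assms(1)] assms(5,6) unfolding Q1_Q2_def by auto
  then have fin: "finite Q1" "finite Q2" using finite_part[OF assms(1,2)] by auto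
  have "length (filter (\<lambda>Y. Y \<in> {Q1, Q2}) (map (part_of \<Q>) xs))
      = card ({x. part_of \<Q> x \<in> {Q1, Q2}} \<inter> set xs)"
    using assms(3) by (simp add: filter_map comp_def distinct_length_filter)
  also have "\<dots> \<le> card ((Q1 - {v1}) \<union> (Q2 - {v2}))"
    using assms(4) part_of_mem(2)[OF assms(1)] fin by (intro card_mono) auto
  also have "\<dots> \<le> card (Q1 - {v1}) + card (Q2 - {v2})" by (rule card_Un_le)
  also have "\<dots> = (card Q1 - 1) + (card Q2 - 1)" using fin parts by simp
  also have "\<dots> \<le> 2 * m - 2"
  proof -
    have "card Q1 \<le> m" "card Q2 \<le> m" using assms(7) parts(1,2) by auto
    then show ?thesis by arith
  qed
  finally show ?thesis unfolding Q1_Q2_def .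
qed

theorem lemma4p3:
  fixes c :: nat and V :: "'a set" and E :: "'a set set"
    and v1 v2 :: 'a and \<P> \<Q> :: "'a set set"
  assumes fan: "double_fan V E v1 v2"
    and size: "card V \<ge> 8 * c ^ 2 + 2 * c + 1"
    and P: "tree_partition V E \<P>"
    and Q: "partition_on V \<Q>"
    and cap: "\<forall>P\<in>\<P>. \<forall>Q\<in>\<Q>. card (P \<inter> Q) \<le> c"
    and P12: "part_of \<P> v1 \<noteq> part_of \<P> v2"
    and Q12: "part_of \<Q> v1 \<noteq> part_of \<Q> v2"
  shows "\<exists>v3\<in>V. \<exists>v4\<in>V. card {v1, v2, v3, v4} = 4 \<and> is_clique E {v1, v2, v3, v4} \<and>
           distinct [part_of \<Q> v1, part_of \<Q> v2, part_of \<Q> v3, part_of \<Q> v4]"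
proof -
  have "graph V E" and dom: "dominant V E v1" "dominant V E v2"
    using fan unfolding double_fan_def by auto
  then have fin: "finite V" and v12: "v1 \<in> V" "v2 \<in> V"
    unfolding graph_def dominant_def by auto
  obtain xs where xs: "distinct xs" "set xs = V - {v1, v2}" "length xs = card V - 2"
    and path: "successively (\<lambda>a b. {a, b} \<in> E) xs"
    using double_fan_spine[OF fan] .
  have small: "\<forall>Y\<in>\<Q>. card Y \<le> 2 * c"
    using card_part_le_twice_cap[OF P dom P12 Q cap] by blast
  obtain d where d: "c = Suc d"
    using cap_pos[OF _ Q fin v12(1) cap] P unfolding tree_partition_def by (cases c) auto
  have "(2 * (2 * c) - 2) * (2 * c + 1) + 2 * c + 2 < 8 * c ^ 2 + 2 * c + 1"
    unfolding d by (simp add: power2_eq_square algebra_simps)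
  then have long: "(2 * (2 * c) - 2) * (2 * c + 1) + 2 * c < length (map (part_of \<Q>) xs)"
    using size xs(3) by simp
  define B where "B = {part_of \<Q> v1, part_of \<Q> v2}"
  have "\<not> successively (\<lambda>a b. a \<notin> B \<longrightarrow> b \<notin> B \<longrightarrow> a = b) (map (part_of \<Q>) xs)"
    using long count_list_map_part_of_le[OF Q fin xs(1) _ small] length_filter_part_of_pair_le[OF Q fin xs(1) _ v12 small]
      xs(2) unfolding B_def by (intro long_list_has_colour_change) auto
  then have "\<exists>a\<in>set xs. \<exists>b\<in>set xs. {a, b} \<in> E \<and>
      \<not> (part_of \<Q> a \<notin> B \<longrightarrow> part_of \<Q> b \<notin> B \<longrightarrow> part_of \<Q> a = part_of \<Q> b)"
    by (intro successively_counterexample[OF path]) (simp add: successively_map)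
  then obtain a b where ab: "a \<in> V - {v1, v2}" "b \<in> V - {v1, v2}" "{a, b} \<in> E"
    and colours: "part_of \<Q> a \<notin> B" "part_of \<Q> b \<notin> B" "part_of \<Q> a \<noteq> part_of \<Q> b"
    using xs(2) by blast
  then have "a \<noteq> b" by blast
  have "distinct [part_of \<Q> v1, part_of \<Q> v2, part_of \<Q> a, part_of \<Q> b]"
    using colours Q12 unfolding B_def by auto
  then show ?thesis using double_fan_clique[OF fan ab(1,2) \<open>a \<noteq> b\<close> ab(3)] ab(1,2) by blast
qed

end
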